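(* Let $x$ be a positive integer relatively prime to $3$. Then every element $(x_0,x_1,x_2,\dots)\in\widetilde{\mathcal{I}}_x$ has some term $x_i$ with $x_i\equiv 2\pmod 9$.
   Context: Let $T(z)=z/2$ for $z$ even and $T(z)=(3z+1)/2$ for $z$ odd. For a positive integer $x$ not divisible by $3$, $\widetilde{\mathcal{I}}_x$ is the set of infinite sequences $(x_0,x_1,x_2,\dots)$ of positive integers not divisible by $3$ such that $x_0=x$ and $T(x_{i+1})=x_i$ for all $i\ge 0$. *)

theory Defs
  imports Main
begin

definition T :: "nat \<Rightarrow> nat" where
  "T z = (if even z then z div 2 else (3 * z + 1) div 2)"

definition Itilde :: "nat \<Rightarrow> (nat \<Rightarrow> nat) set" where
  "Itilde x = {s. s 0 = x \<and> (\<forall>i. 0 < s i \<and> \<not> 3 dvd s i) \<and> (\<forall>i. T (s (Suc i)) = s i)}"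

end

theory Submission
  imports Defs
begin

(* A T-preimage b of a is either 2a (even branch) or (2a-1)/3 (odd branch).
   Looking at a mod 9 for b prime to 3, the odd branch is only possible when
   a = 2 or a = 8 (mod 9); hence from the classes 1, 4, 5, 7 the orbit must
   double, which moves the residue along 7 -> 5 -> 1 -> 2 and 4 -> 8.  From
   class 8 the orbit either doubles into class 7, or takes the odd branch to
   a strictly smaller term which is 2 mod 3.

   So an orbit avoiding class 2 also avoids 1, 5 and 7, is in class 8 from the
   second term on, and therefore always takes the odd branch: its terms form
   a strictly decreasing sequence of naturals, which is impossible. *)

lemma T_preimage_cases:
  assumes "T b = a"
  shows "b = 2 * a \<or> 3 * b + 1 = 2 * a"
  using assms unfolding T_def by (cases "even b") (auto elim!: evenE oddE)

text \<open>The residues mod 9, listed explicitly so that case analyses on them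
  reduce to numeral evaluation.\<close>
lemma residues_below_9:
  fixes m :: nat
  assumes "m < 9"
  shows "m \<in> {0, 1, 2, 3, 4, 5, 6, 7, 8}"
  using assms by (auto simp: less_Suc_eq numeral_eq_Suc)

lemma odd_branch_mod_9:
  fixes a b :: nat
  assumes odd: "3 * b + 1 = 2 * a" and b: "\<not> 3 dvd b"
  shows "a mod 9 = 2 \<or> (a mod 9 = 8 \<and> b mod 3 = 2)"
proof -
  obtain q r where a: "a = 9 * q + r" and r: "r = a mod 9"
    by (metis div_mod_decomp mult.commute)
  have "r \<in> {0, 1, 2, 3, 4, 5, 6, 7, 8}" unfolding r by (rule residues_below_9) simp
  then consider "r = 2" | "r = 5" | "r = 8" | "r \<in> {0, 1, 3, 4, 6, 7}" by auto
  then show ?thesis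
  proof cases
    case 1
    then show ?thesis using r by simp
  next
    case 2
    then have "b = 3 * (2 * q + 1)" using odd a by simp
    then show ?thesis using b by simp
  next
    case 3
    then have "b = 3 * (2 * q + 1) + 2" using odd a by simp
    then have "b mod 3 = 2" by presburger
    then show ?thesis using r 3 by simp
  next
    case 4
    then have "(2 * a) mod 3 \<noteq> 1" unfolding a by (auto simp: mod_add_eq[symmetric])
    moreover have "(2 * a) mod 3 = 1" unfolding odd[symmetric] by simp
    ultimately show ?thesis by contradiction
  qed
qed

lemma double_mod_9: "(2 * n) mod 9 = (2 * (n mod 9)) mod (9 :: nat)"
  by (simp add: mod_mult_right_eq)

lemma preimage_is_double:
  assumes "T b = a" and "\<not> 3 dvd b" and "a mod 9 \<noteq> 2" and "a mod 9 \<noteq> 8"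
  shows "b = 2 * a"
  using T_preimage_cases[OF assms(1)] odd_branch_mod_9[of b a] assms(2-4) by blast

lemma preimage_of_class_8:
  assumes "T b = a" and "\<not> 3 dvd b" and "a mod 9 = 8"
  shows "b mod 9 = 7 \<or> (b < a \<and> b mod 3 = 2)"
  using T_preimage_cases[OF assms(1)]
proof
  assume "b = 2 * a"
  then show ?thesis using assms(3) double_mod_9[of a] by simp
next
  assume odd: "3 * b + 1 = 2 * a"
  then have "b < a" by linarith
  moreover have "b mod 3 = 2" using odd_branch_mod_9[OF odd assms(2)] assms(3) by simp
  ultimately show ?thesis by simp
qed

lemma mod_9_not_dvd_3:
  fixes n :: nat
  assumes "\<not> 3 dvd n"
  shows "n mod 9 \<in> {1, 2, 4, 5, 7, 8}"
proof -
  have "n mod 9 \<in> {0, 1, 2, 3, 4, 5, 6, 7, 8}" by (rule residues_below_9) simp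
  moreover have "(n mod 9) mod 3 \<noteq> 0"
    using assms by (simp add: mod_mod_cancel dvd_eq_mod_eq_0)
  ultimately show ?thesis by auto
qed

lemma orbit_avoiding_2_stays_in_8:
  fixes s :: "nat \<Rightarrow> nat"
  assumes orbit: "\<And>i. T (s (Suc i)) = s i"
    and prime3: "\<And>i. \<not> 3 dvd s i"
    and avoid: "\<And>i. s i mod 9 \<noteq> 2"
  shows "s (Suc i) mod 9 = 8"
proof -
  have doubles: "s (Suc j) = 2 * s j" if "s j mod 9 \<noteq> 8" for j
    using preimage_is_double[OF orbit prime3 avoid that] .
  have no1: "s j mod 9 \<noteq> 1" for j
    using doubles[of j] avoid[of "Suc j"] double_mod_9[of "s j"] by auto
  have no5: "s j mod 9 \<noteq> 5" for j
    using doubles[of j] no1[of "Suc j"] double_mod_9[of "s j"] by auto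
  have no7: "s j mod 9 \<noteq> 7" for j
    using doubles[of j] no5[of "Suc j"] double_mod_9[of "s j"] by auto
  have in_4_or_8: "s j mod 9 = 4 \<or> s j mod 9 = 8" for j
    using mod_9_not_dvd_3[OF prime3[of j]] avoid[of j] no1[of j] no5[of j] no7[of j]
    by auto
  show ?thesis
  proof (cases "s i mod 9 = 8")
    case True
    then have "s (Suc i) mod 3 = 2"
      using preimage_of_class_8[OF orbit prime3] no7[of "Suc i"] by blast
    moreover have "s (Suc i) mod 3 = (s (Suc i) mod 9) mod 3"
      by (simp add: mod_mod_cancel)
    ultimately show ?thesis using in_4_or_8[of "Suc i"] by auto
  next
    case False
    then show ?thesis using doubles[of i] in_4_or_8[of i] double_mod_9[of "s i"] by auto
  qed
qed

text \<open>Every inverse orbit of numbers prime to 3 meets class 2 mod 9: otherwise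
  it would be a strictly decreasing sequence of naturals.\<close>
lemma inverse_orbit_meets_2_mod_9:
  fixes s :: "nat \<Rightarrow> nat"
  assumes orbit: "\<And>i. T (s (Suc i)) = s i" and prime3: "\<And>i. \<not> 3 dvd s i"
  shows "\<exists>i. s i mod 9 = 2"
proof (rule ccontr)
  assume "\<not> (\<exists>i. s i mod 9 = 2)"
  then have eight: "s (Suc i) mod 9 = 8" for i
    using orbit_avoiding_2_stays_in_8[where s = s, OF orbit prime3] by blast
  have decreasing: "s (Suc (Suc i)) < s (Suc i)" for i
    using preimage_of_class_8[OF orbit prime3 eight[of i]] eight[of "Suc i"] by auto
  have "\<exists>f. \<forall>i. (f (Suc i), f i) \<in> less_than"
    by (rule exI[of _ "\<lambda>j. s (Suc j)"]) (simp add: decreasing)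
  then show False using wf_less_than wf_iff_no_infinite_down_chain by blast
qed

theorem mainTheorem11:
  fixes x :: nat and s :: "nat \<Rightarrow> nat"
  assumes "0 < x" and "coprime x 3" and "s \<in> Itilde x"
  shows "\<exists>i. s i mod 9 = 2"
proof -
  have "\<And>i. T (s (Suc i)) = s i" and "\<And>i. \<not> 3 dvd s i"
    using assms(3) unfolding Itilde_def by auto
  then show ?thesis by (rule inverse_orbit_meets_2_mod_9)
qed

end
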